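(* Let $A$ be a $d$-dimensional polystochastic matrix of order $n$, $1\le k\le d-1$, and let $\Gamma$ be a $k$-dimensional plane of $A$ containing an index $\alpha$ with $0<a_\alpha<1$. Then there exist a $k$-dimensional plane $\Gamma'$ parallel to and diagonally located with respect to $\Gamma$, and an index $\alpha'\in\Gamma'$, with $0<a_{\alpha'}<1$.
   Context: $A=(a_\alpha)_{\alpha\in\{0,\dots,n-1\}^d}$ is polystochastic if nonnegative and every line (set of indices obtained by fixing all coordinates but one) sums to $1$. A $k$-dimensional plane of direction $(i_1,\dots,i_{d-k})$ is obtained by fixing coordinates $i_1,\dots,i_{d-k}$ to values $(\beta_1,\dots,\beta_{d-k})$ and letting the other coordinates vary. Two planes are parallel if they have the same direction, and parallel planes with fixed values $(\beta_j)$, $(\gamma_j)$ are diagonally located if $\beta_j\ne\gamma_j$ for every $j$. *)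

theory Defs
  imports Complex_Main
begin

text \<open>Indices of a d-dimensional matrix of order n: functions on the coordinates
  {0..<d} with values in {0..<n} (extensional: 0 outside the coordinate range).\<close>
definition indices :: "nat \<Rightarrow> nat \<Rightarrow> (nat \<Rightarrow> nat) set" where
  "indices d n = {\<alpha>. (\<forall>i<d. \<alpha> i < n) \<and> (\<forall>i. d \<le> i \<longrightarrow> \<alpha> i = 0)}"

definition polystochastic :: "nat \<Rightarrow> nat \<Rightarrow> ((nat \<Rightarrow> nat) \<Rightarrow> real) \<Rightarrow> bool" where
  "polystochastic d n A \<longleftrightarrow>
     (\<forall>\<alpha>\<in>indices d n. 0 \<le> A \<alpha>) \<and>
     (\<forall>\<alpha>\<in>indices d n. \<forall>i<d. (\<Sum>j<n. A (\<alpha>(i := j))) = 1)"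

definition plane :: "nat \<Rightarrow> nat \<Rightarrow> nat set \<Rightarrow> (nat \<Rightarrow> nat) \<Rightarrow> (nat \<Rightarrow> nat) set" where
  "plane d n I \<beta> = {\<alpha>\<in>indices d n. \<forall>i\<in>I. \<alpha> i = \<beta> i}"

definition is_plane :: "nat \<Rightarrow> nat \<Rightarrow> nat \<Rightarrow> nat set \<Rightarrow> (nat \<Rightarrow> nat) \<Rightarrow> bool" where
  "is_plane d n k I \<beta> \<longleftrightarrow> I \<subseteq> {..<d} \<and> card I = d - k \<and> (\<forall>i\<in>I. \<beta> i < n)"

definition diagonally_located :: "nat set \<Rightarrow> (nat \<Rightarrow> nat) \<Rightarrow> (nat \<Rightarrow> nat) \<Rightarrow> bool" where
  "diagonally_located I \<beta> \<gamma> \<longleftrightarrow> (\<forall>i\<in>I. \<beta> i \<noteq> \<gamma> i)"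

end

theory Submission
  imports Defs
begin

text \<open>The entries on a line through \<open>\<alpha>\<close> are nonnegative and sum to 1, so if \<open>0 < a\<^sub>\<alpha> < 1\<close>
  the rest of the line carries the positive mass \<open>1 - a\<^sub>\<alpha> < 1\<close>, and some other entry of the
  line also lies strictly between 0 and 1. Moving along the fixed coordinates of the plane one
  at a time gives such an entry differing from \<open>\<alpha>\<close> in every fixed coordinate; the plane
  through it parallel to the given one is diagonally located.\<close>

lemma sum_eq_1_other_strictly_between:
  fixes f :: "'a \<Rightarrow> 'b::linordered_idom"
  assumes "finite S" and "\<And>y. y \<in> S \<Longrightarrow> 0 \<le> f y" and "sum f S = 1"
    and "x \<in> S" and "0 < f x" and "f x < 1"
  shows "\<exists>y\<in>S - {x}. 0 < f y \<and> f y < 1"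
proof -
  have rest: "sum f (S - {x}) = 1 - f x"
    using assms(1,3,4) by (simp add: sum_diff1)
  have "\<exists>y\<in>S - {x}. 0 < f y"
  proof (rule ccontr)
    assume "\<not> ?thesis"
    then have "sum f (S - {x}) \<le> 0" by (intro sum_nonpos) (auto simp: not_less)
    with rest \<open>f x < 1\<close> show False by simp
  qed
  then obtain y where y: "y \<in> S - {x}" "0 < f y" by blast
  have "f y \<le> sum f (S - {x})"
    using y assms(1,2) by (intro member_le_sum) auto
  with rest y \<open>0 < f x\<close> show ?thesis by auto
qed

lemma fun_upd_in_indices:
  assumes "\<alpha> \<in> indices d n" and "i < d" and "j < n"
  shows "\<alpha>(i := j) \<in> indices d n"
  using assms by (auto simp: indices_def)

lemma polystochastic_line_strictly_between:
  assumes A: "polystochastic d n A" and \<alpha>: "\<alpha> \<in> indices d n" and "i < d"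
    and "0 < A \<alpha>" and "A \<alpha> < 1"
  shows "\<exists>j<n. j \<noteq> \<alpha> i \<and> 0 < A (\<alpha>(i := j)) \<and> A (\<alpha>(i := j)) < 1"
proof -
  have "\<alpha> i < n" using \<alpha> \<open>i < d\<close> by (auto simp: indices_def)
  moreover have "(\<Sum>j<n. A (\<alpha>(i := j))) = 1"
    using A \<alpha> \<open>i < d\<close> by (auto simp: polystochastic_def)
  moreover have "\<And>j. j < n \<Longrightarrow> 0 \<le> A (\<alpha>(i := j))"
    using A fun_upd_in_indices[OF \<alpha> \<open>i < d\<close>] by (auto simp: polystochastic_def)
  ultimately show ?thesis
    using sum_eq_1_other_strictly_between[of "{..<n}" "\<lambda>j. A (\<alpha>(i := j))" "\<alpha> i"] assms(4,5)
    by auto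
qed

lemma polystochastic_strictly_between_change_coords:
  assumes A: "polystochastic d n A" and "finite S" and "S \<subseteq> {..<d}"
    and "\<alpha> \<in> indices d n" and "0 < A \<alpha>" and "A \<alpha> < 1"
  shows "\<exists>\<alpha>'\<in>indices d n. 0 < A \<alpha>' \<and> A \<alpha>' < 1 \<and>
           (\<forall>i\<in>S. \<alpha>' i \<noteq> \<alpha> i) \<and> (\<forall>i. i \<notin> S \<longrightarrow> \<alpha>' i = \<alpha> i)"
  using \<open>finite S\<close> \<open>S \<subseteq> {..<d}\<close>
proof (induction S rule: finite_induct)
  case empty
  with assms(4-6) show ?case by auto
next
  case (insert x F)
  then obtain \<alpha>' where \<alpha>': "\<alpha>' \<in> indices d n" "0 < A \<alpha>'" "A \<alpha>' < 1"
    and moved: "\<forall>i\<in>F. \<alpha>' i \<noteq> \<alpha> i" and kept: "\<forall>i. i \<notin> F \<longrightarrow> \<alpha>' i = \<alpha> i"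
    by auto
  have "x < d" using insert.prems by auto
  then obtain j where j: "j < n" "j \<noteq> \<alpha>' x" "0 < A (\<alpha>'(x := j))" "A (\<alpha>'(x := j)) < 1"
    using polystochastic_line_strictly_between[OF A \<alpha>'(1) \<open>x < d\<close> \<alpha>'(2,3)] by blast
  show ?case
  proof (intro bexI conjI)
    show "0 < A (\<alpha>'(x := j))" "A (\<alpha>'(x := j)) < 1" using j(3,4) .
    show "\<forall>i\<in>insert x F. (\<alpha>'(x := j)) i \<noteq> \<alpha> i"
      using j(2) moved kept insert.hyps(2) by auto
    show "\<forall>i. i \<notin> insert x F \<longrightarrow> (\<alpha>'(x := j)) i = \<alpha> i"
      using kept by auto
    show "\<alpha>'(x := j) \<in> indices d n"
      using fun_upd_in_indices[OF \<alpha>'(1) \<open>x < d\<close> j(1)] .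
  qed
qed

theorem mainTheorem7:
  fixes d n k :: nat and A :: "(nat \<Rightarrow> nat) \<Rightarrow> real"
    and I :: "nat set" and \<beta> \<alpha> :: "nat \<Rightarrow> nat"
  assumes "polystochastic d n A"
    and "1 \<le> k" and "k \<le> d - 1"
    and "is_plane d n k I \<beta>"
    and "\<alpha> \<in> plane d n I \<beta>" and "0 < A \<alpha>" and "A \<alpha> < 1"
  shows "\<exists>\<gamma> \<alpha>'. is_plane d n k I \<gamma> \<and> diagonally_located I \<beta> \<gamma> \<and>
           \<alpha>' \<in> plane d n I \<gamma> \<and> 0 < A \<alpha>' \<and> A \<alpha>' < 1"
proof -
  have I: "I \<subseteq> {..<d}" "card I = d - k" using assms(4) by (auto simp: is_plane_def)
  then have "finite I" using finite_subset by blast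
  have \<alpha>: "\<alpha> \<in> indices d n" "\<forall>i\<in>I. \<alpha> i = \<beta> i" using assms(5) by (auto simp: plane_def)
  obtain \<alpha>' where \<alpha>': "\<alpha>' \<in> indices d n" "0 < A \<alpha>'" "A \<alpha>' < 1" "\<forall>i\<in>I. \<alpha>' i \<noteq> \<alpha> i"
    using polystochastic_strictly_between_change_coords[OF assms(1) \<open>finite I\<close> I(1) \<alpha>(1) assms(6,7)]
    by blast
  have "is_plane d n k I \<alpha>'" using I \<alpha>'(1) by (auto simp: is_plane_def indices_def)
  moreover have "diagonally_located I \<beta> \<alpha>'"
    using \<alpha>(2) \<alpha>'(4) by (auto simp: diagonally_located_def)
  moreover have "\<alpha>' \<in> plane d n I \<alpha>'" using \<alpha>'(1) by (auto simp: plane_def)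
  ultimately show ?thesis using \<alpha>' by blast
qed

end
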